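(* Let $p$ and $q$ be groupoid terms in a set of variables $X$. Then, with each $n_x$ denoting a suitable integer: (i) $p=q$ is in $\Sigma_{1,2,3}$ iff $[p]-[q]=\sum_{x\in X} n_x(\alpha+\beta-\gamma-1)x$ for some integers $n_x$; (ii) $p=q$ is in $\Sigma_{1,2,4}$ iff $[p]-[q]=\sum_{x\in X} n_x(\alpha-\beta+\gamma-1)x$ for some integers $n_x$; (iii) $p=q$ is in $\Sigma_{2,3,4}$ iff $[p]-[q]=\sum_{x\in X} n_x(\alpha+\beta+\gamma+1)x$ for some integers $n_x$.
   Context: Let $f_1(x,y)=x+y$, $f_2(x,y)=x-y$, $f_3(x,y)=-x+y$, $f_4(x,y)=-x-y$ on the integers $\mathbb{Z}$. For $K\subseteq\{1,2,3,4\}$, $\Sigma_K$ (written e.g. $\Sigma_{1,2,3}$) is the set of groupoid identities satisfied in $\mathbb{Z}$ by the operation $f_k$ for every $k\in K$. Let $\mathbf{KL}=\{1,\alpha,\beta,\gamma\}$ be the Klein 4-group ($\alpha^2=\beta^2=1$, $\alpha\beta=\gamma$). For a term $p$ in variables $X$, $[p]$ denotes the element of the free $\mathbb{Z}[\mathbf{KL}]$-module on $X$ obtained by evaluating $p$ with the product $uv$ interpreted as $\alpha u+\beta v$; thus $[p]=\sum_{x\in X} a_x x$ with $a_x\in\mathbb{N}[\mathbf{KL}]$. *)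

theory Defs
  imports Main
begin

datatype 'v gterm = Var 'v | Op "'v gterm" "'v gterm"

fun fop :: "nat \<Rightarrow> int \<Rightarrow> int \<Rightarrow> int" where
  "fop k x y = (if k = 1 then x + y else if k = 2 then x - y
                else if k = 3 then - x + y else - x - y)"

fun geval :: "nat \<Rightarrow> ('v \<Rightarrow> int) \<Rightarrow> 'v gterm \<Rightarrow> int" where
  "geval k e (Var x) = e x"
| "geval k e (Op p q) = fop k (geval k e p) (geval k e q)"

definition Sigma :: "nat set \<Rightarrow> ('v gterm \<times> 'v gterm) set" where
  "Sigma K = {(p, q). \<forall>k\<in>K. \<forall>e. geval k e p = geval k e q}"

datatype kl = One | Alpha | Beta | Gamma

fun klmul :: "kl \<Rightarrow> kl \<Rightarrow> kl" where
  "klmul One g = g"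
| "klmul g One = g"
| "klmul Alpha Alpha = One"
| "klmul Beta Beta = One"
| "klmul Gamma Gamma = One"
| "klmul Alpha Beta = Gamma"
| "klmul Beta Alpha = Gamma"
| "klmul Alpha Gamma = Beta"
| "klmul Gamma Alpha = Beta"
| "klmul Beta Gamma = Alpha"
| "klmul Gamma Beta = Alpha"

text \<open>Elements of Z[KL] are coefficient functions kl => int. Product (convolution);
  every group element is its own inverse, so (a*b)(g) = sum_h a(h) b(h g).\<close>
definition grmul :: "(kl \<Rightarrow> int) \<Rightarrow> (kl \<Rightarrow> int) \<Rightarrow> (kl \<Rightarrow> int)" where
  "grmul a b = (\<lambda>g. \<Sum>h\<in>{One, Alpha, Beta, Gamma}. a h * b (klmul h g))"

definition grbasis :: "kl \<Rightarrow> (kl \<Rightarrow> int)" where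
  "grbasis h = (\<lambda>g. if g = h then 1 else 0)"

text \<open>[p], an element of the free Z[KL]-module on the variables, given as the
  coefficient map x |-> a_x.  Product uv is interpreted as alpha u + beta v.\<close>
fun brk :: "'v gterm \<Rightarrow> 'v \<Rightarrow> (kl \<Rightarrow> int)" where
  "brk (Var y) = (\<lambda>x. if x = y then grbasis One else (\<lambda>g. 0))"
| "brk (Op p q) = (\<lambda>x g. grmul (grbasis Alpha) (brk p x) g + grmul (grbasis Beta) (brk q x) g)"

end

theory Submission
  imports Defs
begin

(* Each f_k is the linear form (x, y) |-> s x + t y with signs s, t = +-1, so evaluating
   a term p under f_k substitutes s, t for alpha, beta in [p]: it applies the character
   chi_k of the Klein group, extended linearly to Z[KL], to every coefficient of [p].
   Hence p = q holds under f_k iff chi_k kills every coefficient of [p] - [q].  The four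
   characters are linearly independent, and the common kernel of three of them in Z[KL]
   consists of the integer multiples of sum_g chi(g) g for the remaining character chi. *)

definition sign_left :: "nat \<Rightarrow> int" where
  "sign_left k = (if k = 1 \<or> k = 2 then 1 else -1)"

definition sign_right :: "nat \<Rightarrow> int" where
  "sign_right k = (if k = 1 \<or> k = 3 then 1 else -1)"

lemma fop_eq_signs: "fop k x y = sign_left k * x + sign_right k * y"
  by (simp add: sign_left_def sign_right_def)

fun kchar :: "nat \<Rightarrow> kl \<Rightarrow> int" where
  "kchar k One = 1"
| "kchar k Alpha = sign_left k"
| "kchar k Beta = sign_right k"
| "kchar k Gamma = sign_left k * sign_right k"

definition grchar :: "nat \<Rightarrow> (kl \<Rightarrow> int) \<Rightarrow> int" where
  "grchar k a = (\<Sum>g\<in>{One, Alpha, Beta, Gamma}. kchar k g * a g)"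

lemma grchar_grbasis: "grchar k (grbasis h) = kchar k h"
  by (cases h) (simp_all add: grchar_def grbasis_def)

lemma grchar_add: "grchar k (\<lambda>g. a g + b g) = grchar k a + grchar k b"
  by (simp add: grchar_def algebra_simps)

lemma grchar_diff: "grchar k (\<lambda>g. a g - b g) = grchar k a - grchar k b"
  by (simp add: grchar_def algebra_simps)

lemma grchar_grmul: "grchar k (grmul a b) = grchar k a * grchar k b"
  by (simp add: grchar_def grmul_def sign_left_def sign_right_def algebra_simps)

lemma grchar_brk_Var: "grchar k (brk (Var y) x) = (if x = y then 1 else 0)"
  by (simp add: grchar_grbasis) (simp add: grchar_def)

lemma grchar_brk_Op:
  "grchar k (brk (Op p q) x) = sign_left k * grchar k (brk p x) + sign_right k * grchar k (brk q x)"
  by (simp add: grchar_add grchar_grmul grchar_grbasis)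

lemma geval_eq_sum_grchar:
  assumes "finite V" "set_gterm p \<subseteq> V"
  shows "geval k e p = (\<Sum>x\<in>V. e x * grchar k (brk p x))"
  using assms(2)
proof (induction p)
  case (Var y)
  then show ?case
    using \<open>finite V\<close>
    by (simp del: brk.simps add: grchar_brk_Var if_distrib[of "\<lambda>c. _ * c"] cong: if_cong)
next
  case (Op p q)
  have "geval k e (Op p q) = sign_left k * geval k e p + sign_right k * geval k e q"
    by (simp only: geval.simps fop_eq_signs)
  with Op show ?case
    by (simp del: brk.simps add: grchar_brk_Op sum_distrib_left sum.distrib algebra_simps)
qed

lemma identity_under_fop_iff:
  "(\<forall>e. geval k e p = geval k e q) \<longleftrightarrow> (\<forall>x. grchar k (brk p x) = grchar k (brk q x))"
proof
  assume eq: "\<forall>e. geval k e p = geval k e q"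
  show "\<forall>x. grchar k (brk p x) = grchar k (brk q x)"
  proof
    fix x
    \<comment> \<open>the environment that is 1 at x and 0 elsewhere reads off the coefficient at x\<close>
    define V where "V = insert x (set_gterm p \<union> set_gterm q)"
    have V: "finite V" "set_gterm p \<subseteq> V" "set_gterm q \<subseteq> V" "x \<in> V"
      by (auto simp: V_def gterm.set_finite)
    have "geval k (\<lambda>y. if y = x then 1 else 0) r = grchar k (brk r x)"
      if "set_gterm r \<subseteq> V" for r
      using geval_eq_sum_grchar[OF \<open>finite V\<close> that] V
      by (simp add: if_distrib[of "\<lambda>c. c * _"] cong: if_cong)
    then show "grchar k (brk p x) = grchar k (brk q x)"
      using eq V by metis
  qed
next
  assume "\<forall>x. grchar k (brk p x) = grchar k (brk q x)"
  moreover have "finite (set_gterm p \<union> set_gterm q)"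
    by (simp add: gterm.set_finite)
  ultimately show "\<forall>e. geval k e p = geval k e q"
    using geval_eq_sum_grchar[of "set_gterm p \<union> set_gterm q"] by simp
qed

lemma Sigma_iff_grchar:
  "(p, q) \<in> Sigma K \<longleftrightarrow> (\<forall>k\<in>K. \<forall>x. grchar k (\<lambda>g. brk p x g - brk q x g) = 0)"
  by (simp add: Sigma_def identity_under_fop_iff grchar_diff)

lemma common_kernel_of_three_grchars:
  assumes "j \<in> {1, 2, 3, 4}"
  shows "(\<forall>k\<in>{1, 2, 3, 4} - {j}. grchar k a = 0) \<longleftrightarrow> (\<exists>n. \<forall>g. a g = n * kchar j g)"
proof
  assume "\<forall>k\<in>{1, 2, 3, 4} - {j}. grchar k a = 0"
  then have "a g = a One * kchar j g" for g
    using assms by (cases g) (auto simp: grchar_def sign_left_def sign_right_def insert_Diff_if)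
  then show "\<exists>n. \<forall>g. a g = n * kchar j g" by blast
next
  assume "\<exists>n. \<forall>g. a g = n * kchar j g"
  then obtain n where "\<And>g. a g = n * kchar j g" by blast
  then show "\<forall>k\<in>{1, 2, 3, 4} - {j}. grchar k a = 0"
    using assms by (auto simp: grchar_def sign_left_def sign_right_def)
qed

lemma Sigma_all_but_iff:
  assumes "j \<in> {1, 2, 3, 4}"
  shows "(p, q) \<in> Sigma ({1, 2, 3, 4} - {j}) \<longleftrightarrow>
    (\<exists>n. \<forall>x g. brk p x g - brk q x g = n x * kchar j g)"
proof -
  have "(p, q) \<in> Sigma ({1, 2, 3, 4} - {j}) \<longleftrightarrow>
      (\<forall>x. \<exists>m. \<forall>g. brk p x g - brk q x g = m * kchar j g)"
    unfolding Sigma_iff_grchar common_kernel_of_three_grchars[OF assms, symmetric] by blast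
  also have "\<dots> \<longleftrightarrow> (\<exists>n. \<forall>x g. brk p x g - brk q x g = n x * kchar j g)"
    by (rule choice_iff)
  finally show ?thesis .
qed

lemma ex_multiples_uminus:
  "(\<exists>n. \<forall>x g. D x g = n x * - c g) \<longleftrightarrow> (\<exists>n. \<forall>x g. D x g = n x * (c g :: int))"
proof
  assume "\<exists>n. \<forall>x g. D x g = n x * - c g"
  then obtain n where "\<forall>x g. D x g = n x * - c g" ..
  then have "\<forall>x g. D x g = - n x * c g" by simp
  then show "\<exists>n. \<forall>x g. D x g = n x * c g" by (rule exI[of _ "\<lambda>x. - n x"])
next
  assume "\<exists>n. \<forall>x g. D x g = n x * c g"
  then obtain n where "\<forall>x g. D x g = n x * c g" ..
  then have "\<forall>x g. D x g = - n x * - c g" by simp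
  then show "\<exists>n. \<forall>x g. D x g = n x * - c g" by (rule exI[of _ "\<lambda>x. - n x"])
qed

theorem lemma2p1:
  fixes p q :: "'v gterm"
  shows "((p, q) \<in> Sigma {1, 2, 3} \<longleftrightarrow>
           (\<exists>n :: 'v \<Rightarrow> int. \<forall>x g. brk p x g - brk q x g =
              n x * (grbasis Alpha g + grbasis Beta g - grbasis Gamma g - grbasis One g)))
       \<and> ((p, q) \<in> Sigma {1, 2, 4} \<longleftrightarrow>
           (\<exists>n :: 'v \<Rightarrow> int. \<forall>x g. brk p x g - brk q x g =
              n x * (grbasis Alpha g - grbasis Beta g + grbasis Gamma g - grbasis One g)))
       \<and> ((p, q) \<in> Sigma {2, 3, 4} \<longleftrightarrow>
           (\<exists>n :: 'v \<Rightarrow> int. \<forall>x g. brk p x g - brk q x g =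
              n x * (grbasis Alpha g + grbasis Beta g + grbasis Gamma g + grbasis One g)))"
proof -
  have "{1, 2, 3} = {1, 2, 3, 4} - {4 :: nat}" "{1, 2, 4} = {1, 2, 3, 4} - {3 :: nat}"
    "{2, 3, 4} = {1, 2, 3, 4} - {1 :: nat}"
    by auto
  moreover have
    "kchar 4 g = - (grbasis Alpha g + grbasis Beta g - grbasis Gamma g - grbasis One g)"
    "kchar 3 g = - (grbasis Alpha g - grbasis Beta g + grbasis Gamma g - grbasis One g)"
    "kchar 1 g = grbasis Alpha g + grbasis Beta g + grbasis Gamma g + grbasis One g" for g
    by (cases g; simp add: grbasis_def sign_left_def sign_right_def)+
  ultimately show ?thesis
    using Sigma_all_but_iff[of 4 p q] Sigma_all_but_iff[of 3 p q]
      Sigma_all_but_iff[of 1 p q]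
    by (simp only: ex_multiples_uminus insert_iff simp_thms)
qed

end
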